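(* For each $n$, let $Y_n$ and $\tilde Y_n$ be random variables taking values in the same countable set $\mathcal Y_n$. If $\lim_{n\to\infty}d(P_{Y_n},P_{\tilde Y_n})=0$, then $$\lim_{n\to\infty}L\Big(\log\tfrac{1}{P_{Y_n}(Y_n)},\ \log\tfrac{1}{P_{\tilde Y_n}(\tilde Y_n)}\Big)=0 .$$
   Context: Logarithms are natural. The variational distance is $d(P,Q)=\sum_a|P(a)-Q(a)|$. For real-valued random variables $U,V$, the Lévy distance is $$L(U,V)=\inf\{m>0:\ \forall x\in\mathbb R,\ \Pr\{U\le x-m\}-m\le\Pr\{V\le x\}\le \Pr\{U\le x+m\}+m\}.$$ *)

theory Defs
  imports "HOL-Probability.Probability"
begin

definition var_dist :: "'a pmf \<Rightarrow> 'a pmf \<Rightarrow> real" where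
  "var_dist P Q = infsum (\<lambda>a. \<bar>pmf P a - pmf Q a\<bar>) UNIV"

text \<open>Levy distance between real random variables U, V, given through their
  distribution functions F(x) = Pr{U <= x}, G(x) = Pr{V <= x}.\<close>
definition levy_dist :: "(real \<Rightarrow> real) \<Rightarrow> (real \<Rightarrow> real) \<Rightarrow> real" where
  "levy_dist F G = Inf {m. m > 0 \<and> (\<forall>x. F (x - m) - m \<le> G x \<and> G x \<le> F (x + m) + m)}"

definition info_cdf :: "'a pmf \<Rightarrow> real \<Rightarrow> real" where
  "info_cdf P x = measure_pmf.prob P {y. ln (1 / pmf P y) \<le> x}"

end

theory Submission
  imports Defs
begin

(* Write d = d(P,Q) and F_P(x) = Pr{log 1/P(Y) <= x} = P{y. P(y) >= e^(-x)}.
   For any event A, Q(A) <= P(A) + d.  Fix m > 0 and let A = {Q >= e^(-x)},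
   C = {P >= e^(-x-m)}.  On A - C we have Q(y) >= e^m P(y) >= (1+m) P(y), so
   m P(y) <= |P(y) - Q(y)| and hence P(A - C) <= d/m.  Together,
       F_Q(x) = Q(A) <= P(A) + d <= P(C) + d/m + d = F_P(x+m) + d + d/m,
   and symmetrically F_P(x-m) <= F_Q(x) + d + d/m.  If 0 < m <= 1 and 2d <= m^2
   then d + d/m <= m, so m is admissible in the infimum defining the Levy
   distance, which is therefore at most m.  Given r > 0, choosing m = min(r/2, 1)
   and n so large that 2 d(P_n,Q_n) <= m^2 yields Levy distance < r. *)

lemma pmf_summable_on: "pmf p summable_on A"
proof -
  have "Infinite_Sum.abs_summable_on (pmf p) A"
    using abs_summable_equivalent pmf_abs_summable by blast
  then show ?thesis by simp
qed

lemma prob_eq_infsum_pmf: "measure_pmf.prob p A = infsum (pmf p) A"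
  using measure_pmf_conv_infsetsum infsetsum_infsum[OF pmf_abs_summable] by metis

lemma pmf_diff_summable_on: "(\<lambda>a. pmf Q a - pmf P a) summable_on A"
proof -
  have "(\<lambda>a. pmf Q a + (-1) * pmf P a) summable_on A"
    by (intro summable_on_add summable_on_cmult_right pmf_summable_on)
  then show ?thesis by simp
qed

lemma pmf_absdiff_summable_on: "(\<lambda>a. \<bar>pmf P a - pmf Q a\<bar>) summable_on A"
  by (rule summable_on_comparison_test[OF summable_on_add[OF pmf_summable_on[of P A] pmf_summable_on[of Q A]]])
     (auto simp: abs_if)

lemma infsum_absdiff_le_var_dist: "infsum (\<lambda>a. \<bar>pmf P a - pmf Q a\<bar>) A \<le> var_dist P Q"
  unfolding var_dist_def
  by (rule infsum_mono_neutral[OF pmf_absdiff_summable_on pmf_absdiff_summable_on]) auto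

lemma var_dist_nonneg: "0 \<le> var_dist P Q"
  unfolding var_dist_def by (rule infsum_nonneg) auto

lemma var_dist_sym: "var_dist P Q = var_dist Q P"
  unfolding var_dist_def by (simp add: abs_minus_commute)

lemma prob_le_prob_plus_var_dist:
  "measure_pmf.prob Q A \<le> measure_pmf.prob P A + var_dist P Q"
proof -
  have "infsum (pmf Q) A = infsum (pmf P) A + infsum (\<lambda>a. pmf Q a - pmf P a) A"
    by (subst infsum_add[OF pmf_summable_on pmf_diff_summable_on, symmetric]) simp
  also have "infsum (\<lambda>a. pmf Q a - pmf P a) A \<le> infsum (\<lambda>a. \<bar>pmf P a - pmf Q a\<bar>) A"
    by (rule infsum_mono[OF pmf_diff_summable_on pmf_absdiff_summable_on]) auto
  also have "\<dots> \<le> var_dist P Q"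
    by (rule infsum_absdiff_le_var_dist)
  finally show ?thesis
    by (simp add: prob_eq_infsum_pmf)
qed

lemma prob_le_var_dist_div:
  assumes m: "m > 0" and dominated: "\<And>y. y \<in> B \<Longrightarrow> m * pmf P y \<le> \<bar>pmf P y - pmf Q y\<bar>"
  shows "measure_pmf.prob P B \<le> var_dist P Q / m"
proof -
  have "m * infsum (pmf P) B = infsum (\<lambda>y. m * pmf P y) B"
    by (simp add: infsum_cmult_right')
  also have "\<dots> \<le> infsum (\<lambda>y. \<bar>pmf P y - pmf Q y\<bar>) B"
    by (intro infsum_mono summable_on_cmult_right pmf_summable_on pmf_absdiff_summable_on dominated)
  also have "\<dots> \<le> var_dist P Q"
    by (rule infsum_absdiff_le_var_dist)
  finally show ?thesis
    using m by (simp add: prob_eq_infsum_pmf field_simps mult.commute)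
qed

text \<open>Within the support, log(1/P(y)) <= x is equivalent to P(y) >= e^(-x).\<close>
lemma info_cdf_eq_prob_pmf_ge: "info_cdf P x = measure_pmf.prob P {y. exp (-x) \<le> pmf P y}"
proof -
  have "y \<in> {y. ln (1 / pmf P y) \<le> x} \<longleftrightarrow> y \<in> {y. exp (-x) \<le> pmf P y}"
    if "y \<in> set_pmf P" for y
  proof -
    have p: "pmf P y > 0" using that by (simp add: set_pmf_iff)
    have "ln (1 / pmf P y) \<le> x \<longleftrightarrow> ln (exp (-x)) \<le> ln (pmf P y)"
      using p by (auto simp: ln_div)
    also have "\<dots> \<longleftrightarrow> exp (-x) \<le> pmf P y"
      using p by (subst ln_le_cancel_iff) auto
    finally show ?thesis by simp
  qed
  then have "{y. ln (1 / pmf P y) \<le> x} \<inter> set_pmf P = {y. exp (-x) \<le> pmf P y} \<inter> set_pmf P"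
    by blast
  then show ?thesis
    unfolding info_cdf_def by (metis measure_Int_set_pmf)
qed

lemma info_cdf_shift_bound:
  assumes m: "m > 0"
  shows "info_cdf Q x \<le> info_cdf P (x + m) + var_dist P Q + var_dist P Q / m"
proof -
  define A where "A = {y. exp (-x) \<le> pmf Q y}"
  define C where "C = {y. exp (-(x + m)) \<le> pmf P y}"
  have outside: "m * pmf P y \<le> \<bar>pmf P y - pmf Q y\<bar>" if "y \<in> A - C" for y
  proof -
    have q: "exp (-x) \<le> pmf Q y" and p: "pmf P y < exp (-(x + m))"
      using that by (auto simp: A_def C_def)
    have "(1 + m) * pmf P y \<le> exp m * pmf P y"
      by (rule mult_right_mono) (auto simp: exp_ge_add_one_self add.commute)
    also have "exp m * pmf P y < exp m * exp (-(x + m))"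
      using p by simp
    also have "exp m * exp (-(x + m)) = exp (-x)"
      by (simp add: exp_add[symmetric])
    finally show ?thesis
      using q by (simp add: algebra_simps)
  qed
  have "measure_pmf.prob Q A \<le> measure_pmf.prob P A + var_dist P Q"
    by (rule prob_le_prob_plus_var_dist)
  also have "measure_pmf.prob P A \<le> measure_pmf.prob P (C \<union> (A - C))"
    by (rule measure_pmf.finite_measure_mono) auto
  also have "\<dots> \<le> measure_pmf.prob P C + measure_pmf.prob P (A - C)"
    by (rule measure_Un_le) auto
  also have "measure_pmf.prob P (A - C) \<le> var_dist P Q / m"
    by (rule prob_le_var_dist_div[OF m outside])
  finally show ?thesis
    by (simp add: info_cdf_eq_prob_pmf_ge A_def C_def)
qed

lemma levy_dist_le:
  assumes "m > 0" and "\<And>x. F (x - m) - m \<le> G x \<and> G x \<le> F (x + m) + m"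
  shows "levy_dist F G \<le> m"
  unfolding levy_dist_def
  by (rule cInf_lower) (use assms in \<open>auto intro: bdd_belowI[of _ 0]\<close>)

lemma levy_dist_nonneg:
  assumes "m > 0" and "\<And>x. F (x - m) - m \<le> G x \<and> G x \<le> F (x + m) + m"
  shows "0 \<le> levy_dist F G"
  unfolding levy_dist_def
  by (rule cInf_greatest) (use assms in auto)

text \<open>A shift m in (0,1] with 2 d(P,Q) <= m^2 is admissible for the information
  distribution functions, since then d + d/m <= m.\<close>
lemma levy_dist_info_cdf_le:
  assumes m: "0 < m" "m \<le> 1" and small: "2 * var_dist P Q \<le> m\<^sup>2"
  shows "0 \<le> levy_dist (info_cdf P) (info_cdf Q) \<and> levy_dist (info_cdf P) (info_cdf Q) \<le> m"
proof -
  let ?d = "var_dist P Q"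
  have "?d \<le> ?d / m"
    using m var_dist_nonneg[of P Q] by (simp add: field_simps mult_left_le_one_le)
  moreover have "?d / m \<le> m / 2"
    using m small by (simp add: field_simps power2_eq_square)
  ultimately have slack: "?d + ?d / m \<le> m"
    by linarith
  have "info_cdf Q x \<le> info_cdf P (x + m) + m" for x
    using info_cdf_shift_bound[OF m(1), of Q x P] slack by linarith
  moreover have "info_cdf P (x - m) \<le> info_cdf Q x + m" for x
    using info_cdf_shift_bound[OF m(1), of P "x - m" Q] slack by (simp add: var_dist_sym)
  ultimately have "info_cdf P (x - m) - m \<le> info_cdf Q x \<and> info_cdf Q x \<le> info_cdf P (x + m) + m"
    for x by (simp add: diff_le_eq)
  then show ?thesis
    using levy_dist_le levy_dist_nonneg m(1) by blast
qed

theorem lemma4: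
  fixes P Q :: "nat \<Rightarrow> 'a pmf"
  assumes "(\<lambda>n. var_dist (P n) (Q n)) \<longlonglongrightarrow> 0"
  shows "(\<lambda>n. levy_dist (info_cdf (P n)) (info_cdf (Q n))) \<longlonglongrightarrow> 0"
proof (rule LIMSEQ_I)
  fix r :: real
  assume "r > 0"
  define m where "m = min (r / 2) 1"
  have m: "0 < m" "m \<le> 1" "m < r"
    using \<open>r > 0\<close> by (auto simp: m_def)
  obtain n0 where n0: "\<And>n. n \<ge> n0 \<Longrightarrow> norm (var_dist (P n) (Q n) - 0) < m\<^sup>2 / 2"
    using LIMSEQ_D[OF assms, of "m\<^sup>2 / 2"] m(1) by auto
  have "norm (levy_dist (info_cdf (P n)) (info_cdf (Q n)) - 0) < r" if "n \<ge> n0" for n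
  proof -
    have "2 * var_dist (P n) (Q n) \<le> m\<^sup>2"
      using n0[OF that] by simp
    then show ?thesis
      using levy_dist_info_cdf_le[OF m(1,2)] m(3) by fastforce
  qed
  then show "\<exists>n0. \<forall>n\<ge>n0. norm (levy_dist (info_cdf (P n)) (info_cdf (Q n)) - 0) < r"
    by blast
qed

end
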